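(* Let $G$ be a finite $3$-group of nilpotency class at most $3$ such that $G/Z(G)$ is powerful. Then $\exp \Omega_{1}(G)\le 3$.
   Context: A finite $3$-group $Q$ is powerful if $[Q,Q]\le Q^{3}=\langle q^3\mid q\in Q\rangle$. $\Omega_{1}(G)=\langle g\in G\mid g^{3}=1\rangle$. *)

theory Defs
  imports "HOL-Algebra.Algebra"
begin

definition center :: "('a, 'b) monoid_scheme \<Rightarrow> 'a set" where
  "center G = {z \<in> carrier G. \<forall>g \<in> carrier G. z \<otimes>\<^bsub>G\<^esub> g = g \<otimes>\<^bsub>G\<^esub> z}"

text \<open>Commutator subgroup [H,K], commutators [h,k] = h k h^-1 k^-1 (any convention gives the same subgroup).\<close>
definition comm_subgroup :: "('a, 'b) monoid_scheme \<Rightarrow> 'a set \<Rightarrow> 'a set \<Rightarrow> 'a set" where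
  "comm_subgroup G H K = generate G
     {h \<otimes>\<^bsub>G\<^esub> k \<otimes>\<^bsub>G\<^esub> inv\<^bsub>G\<^esub> h \<otimes>\<^bsub>G\<^esub> inv\<^bsub>G\<^esub> k | h k. h \<in> H \<and> k \<in> K}"

text \<open>lower_central G n is gamma_(n+1)(G): gamma_1 = G, gamma_(i+1) = [gamma_i, G].\<close>
fun lower_central :: "('a, 'b) monoid_scheme \<Rightarrow> nat \<Rightarrow> 'a set" where
  "lower_central G 0 = carrier G"
| "lower_central G (Suc n) = comm_subgroup G (lower_central G n) (carrier G)"

definition nilpotent_class_le :: "('a, 'b) monoid_scheme \<Rightarrow> nat \<Rightarrow> bool" where
  "nilpotent_class_le G c \<longleftrightarrow> lower_central G c = {\<one>\<^bsub>G\<^esub>}"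

definition powerful3 :: "('a, 'b) monoid_scheme \<Rightarrow> bool" where
  "powerful3 Q \<longleftrightarrow> comm_subgroup Q (carrier Q) (carrier Q)
      \<subseteq> generate Q {q [^]\<^bsub>Q\<^esub> (3::nat) | q. q \<in> carrier Q}"

definition Omega1_3 :: "('a, 'b) monoid_scheme \<Rightarrow> 'a set" where
  "Omega1_3 G = generate G {g \<in> carrier G. g [^]\<^bsub>G\<^esub> (3::nat) = \<one>\<^bsub>G\<^esub>}"

end

theory Submission
  imports Defs
begin

(* Class at most 3 makes every commutator [[a,b],d] central. Hence the identities
   [a^n,b] = [a,b]^n (when [a,b] commutes with a) and (ab)^3 = [b,a]^3 a^3 b^3 (when [b,a]
   commutes with a and b) apply, and for x^3 = 1 they show that [g,x]^3 = 1, by expanding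
   (g x g^-1)^3 = ([g,x] x)^3, and that g^3 commutes with x, by expanding
   (x g x^-1)^3 = ([x,g] g)^3. Since G/Z(G) is powerful, every commutator lies in Z(G) times
   the subgroup generated by the cubes, so [y,x] commutes with x and y whenever
   x^3 = y^3 = 1, and then (xy)^3 = [y,x]^3 x^3 y^3 = 1. Thus the elements with x^3 = 1 form
   a subgroup, which contains Omega_1(G). *)

definition commutator :: "('a, 'b) monoid_scheme \<Rightarrow> 'a \<Rightarrow> 'a \<Rightarrow> 'a" where
  "commutator G a b = a \<otimes>\<^bsub>G\<^esub> b \<otimes>\<^bsub>G\<^esub> inv\<^bsub>G\<^esub> a \<otimes>\<^bsub>G\<^esub> inv\<^bsub>G\<^esub> b"

definition centralizer :: "('a, 'b) monoid_scheme \<Rightarrow> 'a \<Rightarrow> 'a set" where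
  "centralizer G x = {g \<in> carrier G. g \<otimes>\<^bsub>G\<^esub> x = x \<otimes>\<^bsub>G\<^esub> g}"

definition cubes :: "('a, 'b) monoid_scheme \<Rightarrow> 'a set" where
  "cubes G = {g [^]\<^bsub>G\<^esub> (3::nat) | g. g \<in> carrier G}"

context group
begin

lemma inv_mult_cancel_left [simp]:
  "x \<in> carrier G \<Longrightarrow> y \<in> carrier G \<Longrightarrow> inv x \<otimes> (x \<otimes> y) = y"
  by (simp add: m_assoc[symmetric])

lemma commutator_closed [simp]:
  "a \<in> carrier G \<Longrightarrow> b \<in> carrier G \<Longrightarrow> commutator G a b \<in> carrier G"
  by (simp add: commutator_def)

lemma commutator_eq_iff:
  assumes "a \<in> carrier G" "b \<in> carrier G" "c \<in> carrier G"
  shows "commutator G a b = c \<longleftrightarrow> a \<otimes> b = c \<otimes> (b \<otimes> a)"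
proof -
  have "commutator G a b = (a \<otimes> b) \<otimes> inv (b \<otimes> a)"
    using assms by (simp add: commutator_def inv_mult_group m_assoc)
  then show ?thesis
    using assms by (metis inv_solve_right m_closed)
qed

lemma mult_eq_commutator_mult:
  "a \<in> carrier G \<Longrightarrow> b \<in> carrier G \<Longrightarrow> a \<otimes> b = commutator G a b \<otimes> (b \<otimes> a)"
  using commutator_eq_iff[of a b "commutator G a b"] by simp

lemma commutator_swap:
  "a \<in> carrier G \<Longrightarrow> b \<in> carrier G \<Longrightarrow> commutator G b a = inv (commutator G a b)"
  by (simp add: commutator_def m_assoc inv_mult_group)

lemma commutator_pow_left:
  assumes a: "a \<in> carrier G" and b: "b \<in> carrier G"
    and comm: "commutator G a b \<otimes> a = a \<otimes> commutator G a b"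
  shows "commutator G (a [^] (n::nat)) b = commutator G a b [^] n"
proof -
  define s where "s = commutator G a b"
  have s: "s \<in> carrier G" using a b by (simp add: s_def)
  have ab: "a \<otimes> b = s \<otimes> (b \<otimes> a)"
    using mult_eq_commutator_mult[OF a b] by (simp add: s_def)
  have pow: "a [^] n \<otimes> b = s [^] n \<otimes> (b \<otimes> a [^] n)" for n :: nat
  proof (induction n)
    case 0
    then show ?case using b by simp
  next
    case (Suc n)
    have sa: "a [^] n \<otimes> s = s \<otimes> a [^] n"
      using group_commutes_pow[OF _ a s] comm by (simp add: s_def)
    have "a [^] Suc n \<otimes> b = a [^] n \<otimes> (s \<otimes> (b \<otimes> a))"
      using a b s by (simp add: m_assoc ab)
    also have "\<dots> = s \<otimes> (a [^] n \<otimes> b) \<otimes> a"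
      using a b s by (simp add: m_assoc[symmetric] sa)
    also have "\<dots> = s \<otimes> (s [^] n \<otimes> (b \<otimes> a [^] n)) \<otimes> a"
      by (simp only: Suc.IH)
    also have "\<dots> = (s \<otimes> s [^] n) \<otimes> (b \<otimes> (a [^] n \<otimes> a))"
      using a b s by (simp add: m_assoc)
    also have "\<dots> = s [^] Suc n \<otimes> (b \<otimes> a [^] Suc n)"
      using nat_pow_Suc2[OF s, of n] by simp
    finally show ?case .
  qed
  show ?thesis
    using commutator_eq_iff[THEN iffD2, OF nat_pow_closed[OF a] b nat_pow_closed[OF s] pow]
    by (simp add: s_def)
qed

lemma nat_pow_commute:
  assumes "x \<in> carrier G" "y \<in> carrier G" "x \<otimes> y = y \<otimes> x"
  shows "x [^] (m::nat) \<otimes> y [^] (n::nat) = y [^] n \<otimes> x [^] m"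
  using assms group_commutes_pow[of x y m] group_commutes_pow[of y "x [^] m" n] by simp

lemma pow_mult_commutator:
  assumes a: "a \<in> carrier G" and b: "b \<in> carrier G"
    and comm_a: "commutator G b a \<otimes> a = a \<otimes> commutator G b a"
    and comm_b: "commutator G b a \<otimes> b = b \<otimes> commutator G b a"
  shows "(a \<otimes> b) [^] n = commutator G b a [^] (n choose 2) \<otimes> (a [^] n \<otimes> b [^] n)"
proof (induction n)
  case 0
  then show ?case by (simp add: binomial_eq_0)
next
  case (Suc n)
  define s where "s = commutator G b a"
  define C where "C = n choose 2"
  have s: "s \<in> carrier G" using a b by (simp add: s_def)
  have swap: "b [^] n \<otimes> a = s [^] n \<otimes> (a \<otimes> b [^] n)"
    using mult_eq_commutator_mult[of "b [^] n" a] commutator_pow_left[OF b a comm_b] a b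
    by (simp add: s_def)
  have sa: "a [^] n \<otimes> s [^] n = s [^] n \<otimes> a [^] n"
    using nat_pow_commute[OF a s] comm_a by (simp add: s_def)
  have C: "Suc n choose 2 = C + n"
    by (simp add: C_def numeral_2_eq_2)
  have "(a \<otimes> b) [^] Suc n = s [^] C \<otimes> (a [^] n \<otimes> ((b [^] n \<otimes> a) \<otimes> b))"
    using Suc.IH a b s by (simp add: s_def C_def m_assoc)
  also have "\<dots> = s [^] C \<otimes> ((a [^] n \<otimes> s [^] n) \<otimes> (a \<otimes> (b [^] n \<otimes> b)))"
    unfolding swap using a b s by (simp add: m_assoc)
  also have "\<dots> = (s [^] C \<otimes> s [^] n) \<otimes> ((a [^] n \<otimes> a) \<otimes> (b [^] n \<otimes> b))"
    using a b s by (simp add: sa m_assoc)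
  also have "\<dots> = s [^] (Suc n choose 2) \<otimes> (a [^] Suc n \<otimes> b [^] Suc n)"
    using s by (simp add: C nat_pow_mult)
  finally show ?case by (simp add: s_def)
qed

lemma cube_mult_commutator:
  assumes "a \<in> carrier G" "b \<in> carrier G"
    and "commutator G b a \<otimes> a = a \<otimes> commutator G b a"
    and "commutator G b a \<otimes> b = b \<otimes> commutator G b a"
  shows "(a \<otimes> b) [^] (3::nat) = commutator G b a [^] (3::nat) \<otimes> (a [^] (3::nat) \<otimes> b [^] (3::nat))"
proof -
  have "(3::nat) choose 2 = 3"
    by (simp add: choose_two)
  then show ?thesis
    using pow_mult_commutator[OF assms, of 3] by simp
qed

lemma conj_pow:
  assumes "g \<in> carrier G" "x \<in> carrier G"
  shows "(g \<otimes> x \<otimes> inv g) [^] (n::nat) = g \<otimes> x [^] n \<otimes> inv g"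
proof (induction n)
  case (Suc n)
  then show ?case using assms by (simp add: m_assoc)
qed (use assms in simp)

lemma conj_eq_commutator_mult:
  "g \<in> carrier G \<Longrightarrow> x \<in> carrier G \<Longrightarrow> g \<otimes> x \<otimes> inv g = commutator G g x \<otimes> x"
  by (simp add: commutator_def m_assoc)

lemma subgroup_centralizer:
  assumes x: "x \<in> carrier G"
  shows "subgroup (centralizer G x) G"
proof (rule subgroupI)
  show "centralizer G x \<subseteq> carrier G" "centralizer G x \<noteq> {}"
    using x by (auto simp: centralizer_def)
next
  fix g h assume "g \<in> centralizer G x" "h \<in> centralizer G x"
  then have g: "g \<in> carrier G" "g \<otimes> x = x \<otimes> g" and h: "h \<in> carrier G" "h \<otimes> x = x \<otimes> h"
    by (auto simp: centralizer_def)
  have "g \<otimes> h \<otimes> x = x \<otimes> (g \<otimes> h)"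
    using g h x by (simp add: m_assoc) (simp add: m_assoc[symmetric])
  then show "g \<otimes> h \<in> centralizer G x"
    using g h by (simp add: centralizer_def)
  have "inv g \<otimes> x = inv g \<otimes> (x \<otimes> g) \<otimes> inv g"
    using g x by (simp add: m_assoc)
  also have "\<dots> = x \<otimes> inv g"
    using g(1) x by (simp add: g(2)[symmetric])
  finally show "inv g \<in> centralizer G x"
    using g by (simp add: centralizer_def)
qed

lemma center_commute:
  "z \<in> center G \<Longrightarrow> y \<in> carrier G \<Longrightarrow> z \<otimes> y = y \<otimes> z"
  by (simp add: center_def)

lemma center_eq_Inter_centralizer:
  "center G = carrier G \<inter> (\<Inter>x\<in>carrier G. centralizer G x)"
  by (auto simp: center_def centralizer_def)

lemma subgroup_center: "subgroup (center G) G"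
  unfolding center_eq_Inter_centralizer
  by (intro subgroups_Inter_pair subgroup_self subgroups_Inter) (auto simp: subgroup_centralizer)

lemma normal_center: "center G \<lhd> G"
proof -
  have "g \<otimes> z \<otimes> inv g \<in> center G" if g: "g \<in> carrier G" and z: "z \<in> center G" for g z
  proof -
    have "z \<in> carrier G"
      using z by (simp add: center_def)
    then have "g \<otimes> z \<otimes> inv g = z"
      using g by (simp add: center_commute[OF z g, symmetric] m_assoc)
    then show ?thesis using z by simp
  qed
  then show ?thesis
    using subgroup_center by (simp add: normal_inv_iff)
qed

end

lemma commutator_in_comm_subgroup:
  "h \<in> H \<Longrightarrow> k \<in> K \<Longrightarrow> commutator G h k \<in> comm_subgroup G H K"
  unfolding comm_subgroup_def commutator_def by (blast intro: generate.incl)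

lemma commutator_in_lower_central:
  "h \<in> lower_central G n \<Longrightarrow> k \<in> carrier G \<Longrightarrow> commutator G h k \<in> lower_central G (Suc n)"
  by (simp add: commutator_in_comm_subgroup)

lemma (in group_hom) hom_commutator:
  "a \<in> carrier G \<Longrightarrow> b \<in> carrier G \<Longrightarrow> h (commutator G a b) = commutator H (h a) (h b)"
  by (simp add: commutator_def)

lemma (in normal) commutator_in_set_mult_generate_cubes:
  assumes powerful: "powerful3 (G Mod H)" and a: "a \<in> carrier G" and b: "b \<in> carrier G"
  shows "commutator G a b \<in> H <#> generate G (cubes G)"
proof -
  define Q where "Q = G Mod H"
  define \<pi> where "\<pi> = (\<lambda>x. H #> x)"
  interpret \<pi>: group_hom G Q \<pi>
    unfolding group_hom_def group_hom_axioms_def Q_def \<pi>_def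
    using factorgroup_is_group r_coset_hom_Mod is_group by simp
  have carrier_Q: "carrier Q = \<pi> ` carrier G"
    by (auto simp: Q_def \<pi>_def carrier_FactGroup RCOSETS_def)
  have cubes_Q: "cubes Q = \<pi> ` cubes G"
    unfolding cubes_def carrier_Q using \<pi>.hom_nat_pow by auto
  have "\<pi> (commutator G a b) \<in> comm_subgroup Q (carrier Q) (carrier Q)"
    using a b by (simp add: \<pi>.hom_commutator commutator_in_comm_subgroup)
  also have "\<dots> \<subseteq> generate Q (cubes Q)"
    using powerful by (simp add: powerful3_def cubes_def Q_def)
  also have "\<dots> = \<pi> ` generate G (cubes G)"
    unfolding cubes_Q by (rule \<pi>.generate_img) (auto simp: cubes_def)
  finally obtain w where w: "w \<in> generate G (cubes G)" "\<pi> (commutator G a b) = \<pi> w"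
    by auto
  have "commutator G a b \<in> H #> w"
    using w(2) rcos_self[OF commutator_closed[OF a b] subgroup_axioms] by (simp add: \<pi>_def)
  then show ?thesis
    using w(1) by (auto simp: r_coset_def set_mult_def)
qed

locale nilpotent_class3 = group +
  assumes commutator_commutator_in_center:
    "a \<in> carrier G \<Longrightarrow> b \<in> carrier G \<Longrightarrow> d \<in> carrier G \<Longrightarrow>
      commutator G (commutator G a b) d \<in> center G"

lemma (in group) nilpotent_class3I:
  assumes class3: "nilpotent_class_le G 3"
  shows "nilpotent_class3 G"
proof unfold_locales
  fix a b d assume abd: "a \<in> carrier G" "b \<in> carrier G" "d \<in> carrier G"
  define u where "u = commutator G (commutator G a b) d"
  have u: "u \<in> carrier G"
    using abd by (simp add: u_def)
  have u2: "u \<in> lower_central G 2"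
    unfolding u_def numeral_2_eq_2 by (intro commutator_in_lower_central) (auto simp: abd)
  have "u \<otimes> e = e \<otimes> u" if e: "e \<in> carrier G" for e
  proof -
    have "commutator G u e \<in> lower_central G 3"
      using commutator_in_lower_central[OF u2 e] by simp
    then have "commutator G u e = \<one>"
      using class3 by (simp add: nilpotent_class_le_def)
    then show ?thesis
      using mult_eq_commutator_mult[OF u e] u e by simp
  qed
  then show "u \<in> center G"
    using u by (simp add: center_def)
qed

context nilpotent_class3
begin

lemma commutator_commutator_right_in_center:
  assumes "a \<in> carrier G" "b \<in> carrier G" "d \<in> carrier G"
  shows "commutator G d (commutator G a b) \<in> center G"
  using assms commutator_swap[of "commutator G a b" d] commutator_commutator_in_center
    subgroup.m_inv_closed[OF subgroup_center] by simp

lemma commutator_cube_eq_one: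
  assumes g: "g \<in> carrier G" and x: "x \<in> carrier G" and x3: "x [^] (3::nat) = \<one>"
  shows "commutator G g x [^] (3::nat) = \<one>"
proof -
  define c where "c = commutator G g x"
  define s where "s = commutator G x c"
  have c: "c \<in> carrier G"
    using g x by (simp add: c_def)
  have s_comm: "s \<otimes> y = y \<otimes> s" if "y \<in> carrier G" for y
    using center_commute[OF _ that] commutator_commutator_right_in_center[OF g x x]
    by (simp add: s_def c_def)
  have "s [^] (3::nat) = commutator G (x [^] (3::nat)) c"
    using commutator_pow_left[OF x c] s_comm[OF x] by (simp add: s_def)
  also have "\<dots> = \<one>"
    using c by (simp add: x3 commutator_def)
  finally have s3: "s [^] (3::nat) = \<one>" .
  have "(c \<otimes> x) [^] (3::nat) = g \<otimes> x [^] (3::nat) \<otimes> inv g"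
    using conj_pow[OF g x] conj_eq_commutator_mult[OF g x] by (simp add: c_def)
  also have "\<dots> = \<one>"
    using g by (simp add: x3)
  finally have "(c \<otimes> x) [^] (3::nat) = \<one>" .
  moreover have "(c \<otimes> x) [^] (3::nat) = s [^] (3::nat) \<otimes> (c [^] (3::nat) \<otimes> x [^] (3::nat))"
    using cube_mult_commutator[OF c x] s_comm c x by (simp add: s_def)
  ultimately show ?thesis
    using c by (simp add: s3 x3 c_def)
qed

lemma cube_commute_of_cube_eq_one:
  assumes g: "g \<in> carrier G" and x: "x \<in> carrier G" and x3: "x [^] (3::nat) = \<one>"
  shows "g [^] (3::nat) \<otimes> x = x \<otimes> g [^] (3::nat)"
proof -
  define d where "d = commutator G x g"
  define q where "q = commutator G g d"
  have d: "d \<in> carrier G"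
    using g x by (simp add: d_def)
  have q_comm: "q \<otimes> y = y \<otimes> q" if "y \<in> carrier G" for y
    using center_commute[OF _ that] commutator_commutator_right_in_center[OF x g g]
    by (simp add: q_def d_def)
  have d3: "d [^] (3::nat) = \<one>"
    using commutator_cube_eq_one[OF g x x3] g x
    by (simp add: d_def commutator_swap[OF g x] nat_pow_inv)
  have "x \<otimes> g [^] (3::nat) \<otimes> inv x = (d \<otimes> g) [^] (3::nat)"
    using conj_pow[OF x g] conj_eq_commutator_mult[OF x g] by (simp add: d_def)
  also have "\<dots> = q [^] (3::nat) \<otimes> (d [^] (3::nat) \<otimes> g [^] (3::nat))"
    using cube_mult_commutator[OF d g] q_comm d g by (simp add: q_def)
  also have "\<dots> = g [^] (3::nat)"
    using commutator_cube_eq_one[OF g d d3] g by (simp add: q_def d3)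
  finally have "x \<otimes> g [^] (3::nat) \<otimes> inv x \<otimes> x = g [^] (3::nat) \<otimes> x"
    by simp
  then show ?thesis
    using g x by (simp add: m_assoc)
qed

lemma cube_mult_eq_one:
  assumes x: "x \<in> carrier G" and y: "y \<in> carrier G"
    and x3: "x [^] (3::nat) = \<one>" and y3: "y [^] (3::nat) = \<one>"
    and comm_x: "commutator G y x \<otimes> x = x \<otimes> commutator G y x"
    and comm_y: "commutator G y x \<otimes> y = y \<otimes> commutator G y x"
  shows "(x \<otimes> y) [^] (3::nat) = \<one>"
  using cube_mult_commutator[OF x y comm_x comm_y] commutator_cube_eq_one[OF y x x3] x3 y3
  by simp

lemma generate_cubes_subset_centralizer:
  assumes "x \<in> carrier G" "x [^] (3::nat) = \<one>"
  shows "generate G (cubes G) \<subseteq> centralizer G x"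
  using assms
  by (intro generate_subgroup_incl subgroup_centralizer)
    (auto simp: cubes_def centralizer_def cube_commute_of_cube_eq_one)

lemma subgroup_cube_roots_of_one:
  assumes commutators: "\<And>a b. a \<in> carrier G \<Longrightarrow> b \<in> carrier G \<Longrightarrow>
    commutator G a b \<in> center G <#> generate G (cubes G)"
  shows "subgroup {x \<in> carrier G. x [^] (3::nat) = \<one>} G" (is "subgroup ?S G")
proof (rule subgroupI)
  have commute: "commutator G a b \<otimes> x = x \<otimes> commutator G a b"
    if "a \<in> carrier G" "b \<in> carrier G" "x \<in> carrier G" "x [^] (3::nat) = \<one>" for a b x
  proof -
    have "center G <#> generate G (cubes G) \<subseteq> centralizer G x <#> centralizer G x"
      using that generate_cubes_subset_centralizer
      by (intro mono_set_mult) (auto simp: center_def centralizer_def)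
    also have "\<dots> = centralizer G x"
      using that by (simp add: subgroup_mult_id subgroup_centralizer)
    finally show ?thesis
      using commutators[of a b] that by (auto simp: centralizer_def)
  qed
  fix x y assume x: "x \<in> ?S" and y: "y \<in> ?S"
  then show "x \<otimes> y \<in> ?S"
    by (simp add: cube_mult_eq_one commute)
  show "inv x \<in> ?S"
    using x by (simp add: nat_pow_inv)
qed auto

lemma Omega1_3_cube_eq_one:
  assumes commutators: "\<And>a b. a \<in> carrier G \<Longrightarrow> b \<in> carrier G \<Longrightarrow>
    commutator G a b \<in> center G <#> generate G (cubes G)"
    and "x \<in> Omega1_3 G"
  shows "x [^] (3::nat) = \<one>"
  using generate_subgroup_incl[OF _ subgroup_cube_roots_of_one[OF commutators]] assms(2)
  unfolding Omega1_3_def by blast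

end

theorem lemma4p4:
  fixes G (structure)
  assumes "group G"
    and "finite (carrier G)"
    and "\<exists>n::nat. order G = 3 ^ n"
    and "nilpotent_class_le G 3"
    and "powerful3 (G Mod (center G))"
  shows "\<forall>x \<in> Omega1_3 G. x [^] (3::nat) = \<one>"
proof -
  interpret nilpotent_class3 G
    using group.nilpotent_class3I[OF assms(1,4)] .
  interpret normal "center G" G
    by (rule normal_center)
  show ?thesis
    using Omega1_3_cube_eq_one commutator_in_set_mult_generate_cubes[OF assms(5)] by blast
qed

end
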